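(* Let $W\subseteq C^\omega$ be a topologically closed objective and $\mu$ a cardinal, and assume that $(\mathrm{Res}(W),\subseteq)$ is well-founded and has no antichain of cardinality $\mu$. Let $(U,\le)$ be the partially ordered $C$-graph with $V(U)=(\mathrm{Res}(W)\setminus\{\emptyset\})\cup\{\top\}$ ($\top$ a fresh element), ordered by inclusion on $\mathrm{Res}(W)\setminus\{\emptyset\}$ and with $x\le\top$ for all $x$, and with edges $[u]\xrightarrow{c}[v]$ for all $[u],[v]\in \mathrm{Res}(W)\setminus\{\emptyset\}$ and $c\in C$ with $[v]\subseteq[uc]$, together with $\top\xrightarrow{c}x$ for all $x\in V(U)$ and $c\in C$. Then for every cardinal $\kappa$, $(U,\le)$ is a well-monotone $(\kappa,W)$-universal graph of width $<\mu$.
   Context: For $L\subseteq C^*$, $\mathrm{Safe}(L)=\{w\in C^\omega: w\text{ has no prefix in }L\}$; an objective $W\subseteq C^\omega$ is topologically closed if $W=\mathrm{Safe}(L)$ for some $L$. For $u\in C^*$, the left quotient is $u^{-1}W=\{w\in C^\omega: uw\in W\}$, written $[u]$; $\mathrm{Res}(W)$ is the set of left quotients of $W$. A $C$-graph $G$: vertex set $V(G)$, edges $E(G)\subseteq V(G)\times C\times V(G)$ written $v\xrightarrow{c}v'$, every vertex with an outgoing edge. A $C$-tree is a $C$-graph with root $t_0$ such that each vertex has a unique path from $t_0$. A morphism maps vertices so that edges go to edges of the same colour. A vertex satisfies $W$ if every infinite path from it has colour sequence in $W$. Viewing $W$ as the valuation with values $\bot<\top$ ($\bot$ exactly on $W$),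 $G$ is $(\kappa,W)$-universal if for every $C$-tree $T$ of cardinality $<\kappa$ with root $t_0$ there is a morphism $\phi:T\to G$ such that $\phi(t_0)$ satisfies $W$ in $G$ whenever $t_0$ satisfies $W$ in $T$. A partially ordered graph $(G,\le)$ is monotone if $u\ge v\xrightarrow{c}v'\ge u'$ implies $u\xrightarrow{c}u'\in E(G)$, well-monotone if moreover $\le$ is well-founded; width $<\mu$ means no antichain of cardinality $\mu$. *)

theory Defs
  imports Main "HOL-Library.Omega_Words_Fun"
begin

definition Safe :: "'c list set \<Rightarrow> 'c word set" where
  "Safe L = {w. \<forall>n. prefix n w \<notin> L}"

definition topologically_closed :: "'c word set \<Rightarrow> bool" where
  "topologically_closed W \<longleftrightarrow> (\<exists>L. W = Safe L)"

definition left_quotient :: "'c list \<Rightarrow> 'c word set \<Rightarrow> 'c word set" where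
  "left_quotient u W = {w. u \<frown> w \<in> W}"

definition Res :: "'c word set \<Rightarrow> 'c word set set" where
  "Res W = {left_quotient u W | u. True}"

definition is_graph :: "'v set \<Rightarrow> ('v \<times> 'c \<times> 'v) set \<Rightarrow> bool" where
  "is_graph V E \<longleftrightarrow> E \<subseteq> V \<times> UNIV \<times> V \<and> (\<forall>v\<in>V. \<exists>c v'. (v, c, v') \<in> E)"

fun fpath :: "('v \<times> 'c \<times> 'v) set \<Rightarrow> 'v \<Rightarrow> ('v \<times> 'c \<times> 'v) list \<Rightarrow> 'v \<Rightarrow> bool" where
  "fpath E v [] v' \<longleftrightarrow> v = v'"
| "fpath E v (e # es) v' \<longleftrightarrow> fst e = v \<and> e \<in> E \<and> fpath E (snd (snd e)) es v'"

definition is_tree :: "'v set \<Rightarrow> ('v \<times> 'c \<times> 'v) set \<Rightarrow> 'v \<Rightarrow> bool" where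
  "is_tree V E t0 \<longleftrightarrow> is_graph V E \<and> t0 \<in> V \<and> (\<forall>v\<in>V. \<exists>!p. fpath E t0 p v)"

definition morphism :: "('v \<Rightarrow> 'u) \<Rightarrow> 'v set \<Rightarrow> ('v \<times> 'c \<times> 'v) set
    \<Rightarrow> 'u set \<Rightarrow> ('u \<times> 'c \<times> 'u) set \<Rightarrow> bool" where
  "morphism \<phi> V E V' E' \<longleftrightarrow> \<phi> ` V \<subseteq> V' \<and> (\<forall>(v, c, v')\<in>E. (\<phi> v, c, \<phi> v') \<in> E')"

definition satisfies :: "'c word set \<Rightarrow> ('v \<times> 'c \<times> 'v) set \<Rightarrow> 'v \<Rightarrow> bool" where
  "satisfies W E v \<longleftrightarrow>
     (\<forall>(\<rho> :: nat \<Rightarrow> 'v) (col :: 'c word).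
        \<rho> 0 = v \<and> (\<forall>i. (\<rho> i, col i, \<rho> (Suc i)) \<in> E) \<longrightarrow> col \<in> W)"

text \<open>(kappa,W)-universality; the tree vertex type is given by the itself-argument.
  Since the main theorem is polymorphic in that type, all trees are covered.\<close>
definition universal :: "'t itself \<Rightarrow> 'k rel \<Rightarrow> 'c word set \<Rightarrow> 'v set \<Rightarrow> ('v \<times> 'c \<times> 'v) set \<Rightarrow> bool" where
  "universal (_ :: 't itself) \<kappa> W V E \<longleftrightarrow>
     (\<forall>(VT :: 't set) (ET :: ('t \<times> 'c \<times> 't) set) t0.
        is_tree VT ET t0 \<and> (card_of VT, \<kappa>) \<in> ordLess \<longrightarrow>
        (\<exists>\<phi>. morphism \<phi> VT ET V E \<and> (satisfies W ET t0 \<longrightarrow> satisfies W E (\<phi> t0))))"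

definition partial_order_on_set :: "'v set \<Rightarrow> ('v \<Rightarrow> 'v \<Rightarrow> bool) \<Rightarrow> bool" where
  "partial_order_on_set V le \<longleftrightarrow>
     (\<forall>x\<in>V. le x x) \<and> (\<forall>x\<in>V. \<forall>y\<in>V. le x y \<and> le y x \<longrightarrow> x = y) \<and>
     (\<forall>x\<in>V. \<forall>y\<in>V. \<forall>z\<in>V. le x y \<and> le y z \<longrightarrow> le x z)"

definition monotone_graph :: "'v set \<Rightarrow> ('v \<times> 'c \<times> 'v) set \<Rightarrow> ('v \<Rightarrow> 'v \<Rightarrow> bool) \<Rightarrow> bool" where
  "monotone_graph V E le \<longleftrightarrow> is_graph V E \<and> partial_order_on_set V le \<and>
     (\<forall>u\<in>V. \<forall>v\<in>V. \<forall>v'\<in>V. \<forall>u'\<in>V. \<forall>c.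
        le v u \<and> (v, c, v') \<in> E \<and> le u' v' \<longrightarrow> (u, c, u') \<in> E)"

definition well_founded_on :: "'v set \<Rightarrow> ('v \<Rightarrow> 'v \<Rightarrow> bool) \<Rightarrow> bool" where
  "well_founded_on V le \<longleftrightarrow> wf {(x, y). x \<in> V \<and> y \<in> V \<and> le x y \<and> x \<noteq> y}"

definition well_monotone_graph :: "'v set \<Rightarrow> ('v \<times> 'c \<times> 'v) set \<Rightarrow> ('v \<Rightarrow> 'v \<Rightarrow> bool) \<Rightarrow> bool" where
  "well_monotone_graph V E le \<longleftrightarrow> monotone_graph V E le \<and> well_founded_on V le"

definition antichain_on :: "('v \<Rightarrow> 'v \<Rightarrow> bool) \<Rightarrow> 'v set \<Rightarrow> bool" where
  "antichain_on le A \<longleftrightarrow> (\<forall>x\<in>A. \<forall>y\<in>A. x \<noteq> y \<longrightarrow> \<not> le x y \<and> \<not> le y x)"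

definition width_less :: "'v set \<Rightarrow> ('v \<Rightarrow> 'v \<Rightarrow> bool) \<Rightarrow> 'm rel \<Rightarrow> bool" where
  "width_less V le \<mu> \<longleftrightarrow> (\<forall>A\<subseteq>V. antichain_on le A \<longrightarrow> (card_of A, \<mu>) \<notin> ordIso)"

section \<open>The graph U; None plays the role of the fresh top element\<close>

definition U_V :: "'c word set \<Rightarrow> 'c word set option set" where
  "U_V W = Some ` (Res W - {{}}) \<union> {None}"

fun U_le :: "'c word set option \<Rightarrow> 'c word set option \<Rightarrow> bool" where
  "U_le _ None = True"
| "U_le None (Some _) = False"
| "U_le (Some X) (Some Y) = (X \<subseteq> Y)"

definition U_E :: "'c word set \<Rightarrow> ('c word set option \<times> 'c \<times> 'c word set option) set" where
  "U_E W =
     {(Some X, c, Some Y) | X c Y. X \<in> Res W - {{}} \<and> Y \<in> Res W - {{}} \<and>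
        (\<exists>u. X = left_quotient u W \<and> Y \<subseteq> left_quotient (u @ [c]) W)}
   \<union> {(None, c, x) | c x. x \<in> U_V W}"

end

theory Submission
  imports Defs
begin

text \<open>
  For a closed objective, a word belongs to \<open>W\<close> as soon as none of its prefixes has an empty
  residual, so every path of \<open>U\<close> starting at the residual \<open>W = [\<epsilon>]\<close> satisfies \<open>W\<close>: following
  an edge \<open>[u] \<rightarrow>\<^sup>c Y\<close> keeps the current vertex below \<open>[uc]\<close>, and vertices of \<open>U\<close> other than
  \<open>\<top>\<close> are non-empty. A tree whose root satisfies \<open>W\<close> maps into \<open>U\<close> by sending each vertex to
  the residual of the word read along its path from the root (non-empty, since that path
  extends to an infinite one); any other tree maps to \<open>\<top>\<close>. Monotonicity holds because
  \<open>[uc]\<close> depends only on \<open>[u]\<close>, and well-foundedness and the width bound are inherited from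
  \<open>Res W\<close>, the only antichain through \<open>\<top>\<close> being \<open>{\<top>}\<close>. No cardinal hypothesis is
  needed: the embedding works for trees of any size.
\<close>

lemma left_quotient_Nil [simp]: "left_quotient [] W = W"
  by (simp add: left_quotient_def)

lemma left_quotient_snoc: "left_quotient (u @ [c]) W = {w. c ## w \<in> left_quotient u W}"
  by (simp add: left_quotient_def)

lemma left_quotient_in_Res [simp]: "left_quotient u W \<in> Res W"
  unfolding Res_def by blast

lemma topologically_closed_memI:
  assumes "topologically_closed W" and "\<And>n. left_quotient (prefix n w) W \<noteq> {}"
  shows "w \<in> W"
proof (rule ccontr)
  assume "w \<notin> W"
  obtain L where L: "W = Safe L"
    using assms(1) unfolding topologically_closed_def by blast
  with \<open>w \<notin> W\<close> obtain n where bad: "prefix n w \<in> L"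
    unfolding Safe_def by blast
  obtain v where "prefix n w \<frown> v \<in> W"
    using assms(2)[of n] unfolding left_quotient_def by blast
  then have "prefix n (prefix n w \<frown> v) \<notin> L"
    unfolding L Safe_def by blast
  with bad show False
    using prefix_conc_length[of "prefix n w" v] by simp
qed

definition inf_path :: "('v \<times> 'c \<times> 'v) set \<Rightarrow> (nat \<Rightarrow> 'v) \<Rightarrow> 'c word \<Rightarrow> bool" where
  "inf_path E \<rho> col \<longleftrightarrow> (\<forall>i. (\<rho> i, col i, \<rho> (Suc i)) \<in> E)"

lemma satisfies_iff_inf_path:
  "satisfies W E v \<longleftrightarrow> (\<forall>\<rho> col. \<rho> 0 = v \<and> inf_path E \<rho> col \<longrightarrow> col \<in> W)"
  by (simp add: satisfies_def inf_path_def)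

abbreviation labels :: "('v \<times> 'c \<times> 'v) list \<Rightarrow> 'c list" where
  "labels p \<equiv> map (fst \<circ> snd) p"

lemma fpath_append: "fpath E v (p @ q) v'' \<longleftrightarrow> (\<exists>v'. fpath E v p v' \<and> fpath E v' q v'')"
  by (induction p arbitrary: v) auto

lemma is_graph_edge_in_V:
  assumes "is_graph V E" and "(v, c, v') \<in> E"
  shows "v \<in> V" and "v' \<in> V"
  using assms unfolding is_graph_def by auto

lemma is_graph_inf_path:
  assumes "is_graph V E" and "v \<in> V"
  obtains \<rho> col where "\<rho> 0 = v" and "inf_path E \<rho> col"
proof -
  have "\<forall>x\<in>V. \<exists>s. (x, fst s, snd s) \<in> E"
    using assms(1) unfolding is_graph_def by auto
  then obtain nxt where nxt: "\<And>x. x \<in> V \<Longrightarrow> (x, fst (nxt x), snd (nxt x)) \<in> E"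
    by metis
  define \<rho> where "\<rho> n = ((snd \<circ> nxt) ^^ n) v" for n
  have \<rho>_in_V: "\<rho> n \<in> V" for n
  proof (induction n)
    case 0
    show ?case using assms(2) by (simp add: \<rho>_def)
  next
    case (Suc n)
    show ?case
      using is_graph_edge_in_V(2)[OF assms(1) nxt[OF Suc]] by (simp add: \<rho>_def)
  qed
  have "inf_path E \<rho> (\<lambda>i. fst (nxt (\<rho> i)))"
    unfolding inf_path_def using nxt[OF \<rho>_in_V] by (simp add: \<rho>_def)
  moreover have "\<rho> 0 = v"
    by (simp add: \<rho>_def)
  ultimately show thesis
    using that by blast
qed

lemma fpath_inf_path_append:
  assumes "fpath E v p v'" and "\<rho> 0 = v'" and "inf_path E \<rho> col"
  shows "\<exists>\<rho>'. \<rho>' 0 = v \<and> inf_path E \<rho>' (labels p \<frown> col)"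
  using assms(1)
proof (induction p arbitrary: v)
  case Nil
  then show ?case using assms(2,3) by auto
next
  case (Cons e p)
  obtain c v\<^sub>1 where e: "e = (v, c, v\<^sub>1)" and "e \<in> E" and "fpath E v\<^sub>1 p v'"
    using Cons.prems by (cases e) auto
  then obtain \<rho>\<^sub>1 where "\<rho>\<^sub>1 0 = v\<^sub>1" and "inf_path E \<rho>\<^sub>1 (labels p \<frown> col)"
    using Cons.IH by blast
  have "inf_path E (v ## \<rho>\<^sub>1) (labels (e # p) \<frown> col)"
    unfolding inf_path_def
  proof
    fix i
    show "((v ## \<rho>\<^sub>1) i, (labels (e # p) \<frown> col) i, (v ## \<rho>\<^sub>1) (Suc i)) \<in> E"
      using \<open>e \<in> E\<close> \<open>\<rho>\<^sub>1 0 = v\<^sub>1\<close> \<open>inf_path E \<rho>\<^sub>1 (labels p \<frown> col)\<close>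
      by (cases i) (auto simp: e inf_path_def)
  qed
  then show ?case
    by (metis build.simps(1))
qed

lemma satisfies_fpath_left_quotient_nonempty:
  assumes "is_graph V E" and "satisfies W E v" and "fpath E v p t" and "t \<in> V"
  shows "left_quotient (labels p) W \<noteq> {}"
proof -
  obtain \<rho> col where "\<rho> 0 = t" and "inf_path E \<rho> col"
    using is_graph_inf_path[OF assms(1,4)] .
  then obtain \<rho>' where "\<rho>' 0 = v" and "inf_path E \<rho>' (labels p \<frown> col)"
    using fpath_inf_path_append[OF assms(3)] by blast
  then have "col \<in> left_quotient (labels p) W"
    using assms(2) unfolding satisfies_iff_inf_path left_quotient_def by blast
  then show ?thesis by blast
qed

definition tree_path :: "('v \<times> 'c \<times> 'v) set \<Rightarrow> 'v \<Rightarrow> 'v \<Rightarrow> ('v \<times> 'c \<times> 'v) list" where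
  "tree_path E t\<^sub>0 t = (THE p. fpath E t\<^sub>0 p t)"

lemma is_tree_unique_fpath:
  assumes "is_tree V E t\<^sub>0" and "t \<in> V"
  shows "\<exists>!p. fpath E t\<^sub>0 p t"
  using assms unfolding is_tree_def by blast

lemma is_tree_tree_path_eq:
  assumes "is_tree V E t\<^sub>0" and "t \<in> V" and "fpath E t\<^sub>0 p t"
  shows "tree_path E t\<^sub>0 t = p"
  unfolding tree_path_def using is_tree_unique_fpath[OF assms(1,2)] assms(3) by (rule the1_equality)

lemma is_tree_fpath_tree_path:
  assumes "is_tree V E t\<^sub>0" and "t \<in> V"
  shows "fpath E t\<^sub>0 (tree_path E t\<^sub>0 t) t"
  unfolding tree_path_def using is_tree_unique_fpath[OF assms] by (rule theI')

lemma is_tree_tree_path_root: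
  assumes "is_tree V E t\<^sub>0"
  shows "tree_path E t\<^sub>0 t\<^sub>0 = []"
proof -
  have "t\<^sub>0 \<in> V"
    using assms unfolding is_tree_def by blast
  then show ?thesis
    using is_tree_tree_path_eq[OF assms] by simp
qed

lemma is_tree_tree_path_edge:
  assumes "is_tree V E t\<^sub>0" and "(t, c, t') \<in> E"
  shows "tree_path E t\<^sub>0 t' = tree_path E t\<^sub>0 t @ [(t, c, t')]"
proof -
  have "is_graph V E"
    using assms(1) unfolding is_tree_def by blast
  note t_in_V = is_graph_edge_in_V[OF this assms(2)]
  have "fpath E t\<^sub>0 (tree_path E t\<^sub>0 t @ [(t, c, t')]) t'"
    unfolding fpath_append using is_tree_fpath_tree_path[OF assms(1) t_in_V(1)] assms(2) by simp
  then show ?thesis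
    by (rule is_tree_tree_path_eq[OF assms(1) t_in_V(2)])
qed

lemma U_E_Some_Some_iff:
  "(Some X, c, Some Y) \<in> U_E W \<longleftrightarrow>
     X \<in> Res W - {{}} \<and> Y \<in> Res W - {{}} \<and> Y \<subseteq> {w. c ## w \<in> X}"
proof -
  have "(\<exists>u. X = left_quotient u W \<and> Y \<subseteq> left_quotient (u @ [c]) W) \<longleftrightarrow>
      X \<in> Res W \<and> Y \<subseteq> {w. c ## w \<in> X}"
    unfolding Res_def left_quotient_snoc by blast
  then show ?thesis
    unfolding U_E_def by blast
qed

lemma U_E_None_iff: "(None, c, y) \<in> U_E W \<longleftrightarrow> y \<in> U_V W"
  unfolding U_E_def by auto

lemma U_E_Some_None: "(Some X, c, None) \<notin> U_E W"
  unfolding U_E_def by auto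

lemma U_E_Some_source:
  assumes "(Some X, c, y) \<in> U_E W"
  shows "X \<in> Res W - {{}}"
  using assms unfolding U_E_def by auto

lemma U_V_Some_iff: "Some X \<in> U_V W \<longleftrightarrow> X \<in> Res W - {{}}"
  unfolding U_V_def by auto

lemma U_is_graph: "is_graph (U_V W) (U_E W)"
  unfolding is_graph_def
proof (intro conjI ballI)
  show "U_E W \<subseteq> U_V W \<times> UNIV \<times> U_V W"
    unfolding U_E_def U_V_def by auto
next
  fix x
  assume x: "x \<in> U_V W"
  show "\<exists>c y. (x, c, y) \<in> U_E W"
  proof (cases x)
    case None
    then show ?thesis
      using x by (auto simp: U_E_None_iff)
  next
    case (Some X)
    then obtain u w where X: "X = left_quotient u W" and "w \<in> X"
      using x unfolding U_V_def Res_def by auto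
    define Y where "Y = left_quotient (u @ [w 0]) W"
    have "Y \<in> Res W"
      by (simp add: Y_def)
    moreover have "Y \<subseteq> {v. w 0 ## v \<in> X}"
      by (simp add: Y_def X left_quotient_snoc)
    moreover have "suffix 1 w \<in> Y"
      unfolding Y_def left_quotient_snoc using \<open>w \<in> X\<close> X by simp
    ultimately have "(Some X, w 0, Some Y) \<in> U_E W"
      using x Some by (auto simp: U_E_Some_Some_iff U_V_Some_iff)
    then show ?thesis
      using Some by blast
  qed
qed

lemma U_partial_order: "partial_order_on_set (U_V W) U_le"
  unfolding partial_order_on_set_def
proof (intro conjI ballI impI)
  show "U_le x x" for x
    by (cases x) auto
  show "x = y" if "U_le x y \<and> U_le y x" for x y
    using that by (cases x; cases y) auto
  show "U_le x z" if "U_le x y \<and> U_le y z" for x y z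
    using that by (cases x; cases y; cases z) auto
qed

lemma U_monotone: "monotone_graph (U_V W) (U_E W) U_le"
  unfolding monotone_graph_def
proof (intro conjI U_is_graph U_partial_order ballI allI impI)
  fix x y y' x' c
  assume "x \<in> U_V W" and "x' \<in> U_V W" and "U_le y x \<and> (y, c, y') \<in> U_E W \<and> U_le x' y'"
  then show "(x, c, x') \<in> U_E W"
    by (cases x; cases y; cases y'; cases x')
      (auto simp: U_E_None_iff U_E_Some_Some_iff U_E_Some_None U_V_Some_iff)
qed

lemma U_well_founded:
  fixes W :: "'c word set"
  assumes "wf {(X, Y). X \<in> Res W \<and> Y \<in> Res W \<and> X \<subset> Y}" (is "wf ?R")
  shows "well_founded_on (U_V W) U_le"
  unfolding well_founded_on_def
proof (rule wf_subset)
  define rank :: "'c word set option \<Rightarrow> nat \<times> 'c word set"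
    where "rank x = (case x of None \<Rightarrow> (1::nat, {}) | Some X \<Rightarrow> (0, X))" for x
  show "wf (inv_image (less_than <*lex*> ?R) rank)"
    using assms by (intro wf_inv_image wf_lex_prod wf_less_than)
  show "{(x, y). x \<in> U_V W \<and> y \<in> U_V W \<and> U_le x y \<and> x \<noteq> y} \<subseteq> inv_image (less_than <*lex*> ?R) rank"
  proof clarify
    fix x y
    assume "x \<in> U_V W" and "y \<in> U_V W" and "U_le x y" and "x \<noteq> y"
    then show "(x, y) \<in> inv_image (less_than <*lex*> ?R) rank"
      by (cases x; cases y) (auto simp: rank_def U_V_Some_iff)
  qed
qed

lemma antichain_onD:
  assumes "antichain_on le A" and "x \<in> A" and "y \<in> A" and "x \<noteq> y"
  shows "\<not> le x y"
  using assms unfolding antichain_on_def by blast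

lemma U_antichain_equipotent_Res_antichain:
  assumes "A \<subseteq> U_V W" and "antichain_on U_le A"
  obtains B where "B \<subseteq> Res W" and "antichain_on (\<subseteq>) B"
    and "(card_of A, card_of B) \<in> ordIso"
proof (cases "None \<in> A")
  case True
  have "x = None" if "x \<in> A" for x
    using antichain_onD[OF assms(2) that True] by (cases x) auto
  then have "A = {None}"
    using True by blast
  then have "bij_betw (\<lambda>_. W) A {W}"
    by (simp add: bij_betw_def)
  moreover have "{W} \<subseteq> Res W"
    using left_quotient_in_Res[of "[]" W] by simp
  moreover have "antichain_on (\<subseteq>) {W}"
    unfolding antichain_on_def by simp
  ultimately show thesis
    by (intro that card_of_ordIsoI)
next
  case False
  define B where "B = Some -` A"
  have "A \<subseteq> range Some"
    using False by (metis notin_range_Some subsetI)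
  then have "A = Some ` B"
    unfolding B_def image_vimage_eq by blast
  then have "bij_betw Some B A"
    by (simp add: bij_betw_def)
  then have "(card_of A, card_of B) \<in> ordIso"
    by (rule ordIso_symmetric[OF card_of_ordIsoI])
  moreover have "B \<subseteq> Res W"
    using assms(1) unfolding B_def by (auto simp: U_V_Some_iff)
  moreover have "antichain_on (\<subseteq>) B"
    unfolding antichain_on_def B_def
  proof (intro ballI impI)
    fix X Y
    assume "X \<in> Some -` A" and "Y \<in> Some -` A" and "X \<noteq> Y"
    then show "\<not> X \<subseteq> Y \<and> \<not> Y \<subseteq> X"
      using antichain_onD[OF assms(2)] by (metis U_le.simps(3) option.inject vimageD)
  qed
  ultimately show thesis
    using that by blast
qed

lemma U_width_less:
  assumes "\<forall>A\<subseteq>Res W. antichain_on (\<subseteq>) A \<longrightarrow> (card_of A, \<mu>) \<notin> ordIso"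
  shows "width_less (U_V W) U_le \<mu>"
  unfolding width_less_def
proof (intro allI impI notI)
  fix A
  assume "A \<subseteq> U_V W" and "antichain_on U_le A" and "(card_of A, \<mu>) \<in> ordIso"
  obtain B where "B \<subseteq> Res W" and "antichain_on (\<subseteq>) B"
    and AB: "(card_of A, card_of B) \<in> ordIso"
    using U_antichain_equipotent_Res_antichain[OF \<open>A \<subseteq> U_V W\<close> \<open>antichain_on U_le A\<close>] .
  moreover have "(card_of B, \<mu>) \<in> ordIso"
    using ordIso_transitive[OF ordIso_symmetric[OF AB] \<open>(card_of A, \<mu>) \<in> ordIso\<close>] .
  ultimately show False
    using assms by blast
qed

lemma U_inf_path_from_root:
  assumes "\<rho> 0 = Some W" and "inf_path (U_E W) \<rho> col"
  shows "\<exists>X. \<rho> n = Some X \<and> X \<subseteq> left_quotient (prefix n col) W"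
proof (induction n)
  case 0
  show ?case using assms(1) by simp
next
  case (Suc n)
  then obtain X where X: "\<rho> n = Some X" and X_below: "X \<subseteq> left_quotient (prefix n col) W"
    by blast
  have edge: "(Some X, col n, \<rho> (Suc n)) \<in> U_E W"
    using assms(2) X unfolding inf_path_def by metis
  then obtain Y where "\<rho> (Suc n) = Some Y" and "Y \<subseteq> {w. col n ## w \<in> X}"
    by (cases "\<rho> (Suc n)") (auto simp: U_E_Some_None U_E_Some_Some_iff)
  moreover have "{w. col n ## w \<in> X} \<subseteq> left_quotient (prefix (Suc n) col) W"
    using X_below by (auto simp: left_quotient_snoc)
  ultimately show ?case
    by blast
qed

lemma U_root_satisfies:
  assumes "topologically_closed W"
  shows "satisfies W (U_E W) (Some W)"
  unfolding satisfies_iff_inf_path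
proof (intro allI impI)
  fix \<rho> col
  assume "\<rho> 0 = Some W \<and> inf_path (U_E W) \<rho> col"
  then have path: "\<rho> 0 = Some W" "inf_path (U_E W) \<rho> col"
    by blast+
  have "left_quotient (prefix n col) W \<noteq> {}" for n
  proof -
    obtain X where X: "\<rho> n = Some X" and "X \<subseteq> left_quotient (prefix n col) W"
      using U_inf_path_from_root[OF path] by blast
    moreover have "X \<noteq> {}"
      using path(2) X U_E_Some_source unfolding inf_path_def by (metis Diff_iff singletonI)
    ultimately show ?thesis
      by blast
  qed
  then show "col \<in> W"
    by (rule topologically_closed_memI[OF assms])
qed

lemma is_tree_left_quotient_morphism:
  assumes "is_tree V E t\<^sub>0" and "satisfies W E t\<^sub>0"
  shows "morphism (\<lambda>t. Some (left_quotient (labels (tree_path E t\<^sub>0 t)) W)) V E (U_V W) (U_E W)"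
    (is "morphism ?\<phi> V E (U_V W) (U_E W)")
proof -
  have "is_graph V E"
    using assms(1) unfolding is_tree_def by blast
  have in_U: "left_quotient (labels (tree_path E t\<^sub>0 t)) W \<in> Res W - {{}}" if "t \<in> V" for t
    using satisfies_fpath_left_quotient_nonempty[OF \<open>is_graph V E\<close> assms(2)
        is_tree_fpath_tree_path[OF assms(1) that] that]
    by simp
  have "(?\<phi> t, c, ?\<phi> t') \<in> U_E W" if "(t, c, t') \<in> E" for t c t'
  proof -
    note t_in_V = is_graph_edge_in_V[OF \<open>is_graph V E\<close> that]
    have "labels (tree_path E t\<^sub>0 t') = labels (tree_path E t\<^sub>0 t) @ [c]"
      using is_tree_tree_path_edge[OF assms(1) that] by simp
    then show ?thesis
      using in_U[OF t_in_V(1)] in_U[OF t_in_V(2)]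
      by (simp add: U_E_Some_Some_iff left_quotient_snoc)
  qed
  then show ?thesis
    unfolding morphism_def using in_U by (auto simp: U_V_Some_iff)
qed

lemma U_universal:
  fixes W :: "'c word set"
  assumes "topologically_closed W"
  shows "universal TYPE('t) \<kappa> W (U_V W) (U_E W)"
  unfolding universal_def
proof (intro allI impI)
  fix V :: "'t set" and E :: "('t \<times> 'c \<times> 't) set" and t\<^sub>0
  assume "is_tree V E t\<^sub>0 \<and> (card_of V, \<kappa>) \<in> ordLess"
  then have tree: "is_tree V E t\<^sub>0"
    by blast
  show "\<exists>\<phi>. morphism \<phi> V E (U_V W) (U_E W) \<and> (satisfies W E t\<^sub>0 \<longrightarrow> satisfies W (U_E W) (\<phi> t\<^sub>0))"
  proof (cases "satisfies W E t\<^sub>0")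
    case True
    have "left_quotient (labels (tree_path E t\<^sub>0 t\<^sub>0)) W = W"
      by (simp add: is_tree_tree_path_root[OF tree])
    then show ?thesis
      using is_tree_left_quotient_morphism[OF tree True] U_root_satisfies[OF assms] by auto
  next
    case False
    have "morphism (\<lambda>_. None) V E (U_V W) (U_E W)"
      unfolding morphism_def by (auto simp: U_V_def U_E_None_iff)
    then show ?thesis
      using False by blast
  qed
qed

theorem proposition4p4:
  fixes W :: "'c word set" and \<mu> :: "'m rel"
  assumes "topologically_closed W"
    and "Card_order \<mu>"
    and "wf {(X, Y). X \<in> Res W \<and> Y \<in> Res W \<and> X \<subset> Y}"
    and "\<forall>A\<subseteq>Res W. antichain_on (\<subseteq>) A \<longrightarrow> (card_of A, \<mu>) \<notin> ordIso"
  shows "well_monotone_graph (U_V W) (U_E W) U_le \<and> width_less (U_V W) U_le \<mu> \<and>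
         (\<forall>\<kappa> :: 'k rel. Card_order \<kappa> \<longrightarrow> universal TYPE('t) \<kappa> W (U_V W) (U_E W))"
  using U_monotone U_well_founded[OF assms(3)] U_width_less[OF assms(4)] U_universal[OF assms(1)]
  unfolding well_monotone_graph_def by blast

end
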